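(* Let $\mathfrak{A}$ and $\mathfrak{B}$ be weakly Connes amenable dual Banach algebras such that $\mathfrak{A}^2$ is $w^*$-dense in $\mathfrak{A}$ and $\mathfrak{B}^2$ is $w^*$-dense in $\mathfrak{B}$. Then the $\ell^1$-direct sum $\mathfrak{A}\oplus^1\mathfrak{B}$ is weakly Connes amenable.
   Context: A dual Banach algebra is a Banach algebra $\mathfrak{A}$ which is the dual of a Banach space $\mathfrak{A}_*$ and whose multiplication is separately $w^*$-continuous. $\mathfrak{A}^2$ denotes the linear span of the products $ab$, $a,b\in\mathfrak{A}$. $\mathfrak{A}\oplus^1\mathfrak{B}$ has norm $\|(a,b)\|=\|a\|+\|b\|$, coordinatewise operations, and predual $\mathfrak{A}_*\oplus^\infty\mathfrak{B}_*$ (with pairing $\langle(a,b),(\phi,\psi)\rangle=\langle a,\phi\rangle+\langle b,\psi\rangle$), which makes it a dual Banach algebra. A derivation $D:\mathfrak{C}\to F$ is a continuous linear map with $D(xy)=D(x)\cdot y+x\cdot D(y)$; inner if $D(x)=x\cdot f-f\cdot x$ for some $f\in F$. For a Banach bimodule $E$ over a dual Banach algebra $\mathfrak{C}$, $\sigma wc(E)$ is the set of $x\in E$ such that $c\mapsto c\cdot x$ and $c\mapsto x\cdot c$ are continuous from $(\mathfrak{C},w^* )$ to $(E,\sigma(E,E^* ))$; $j_{\mathfrak{C}}:\mathfrak{C}^*\to\sigma wc(\mathfrak{C})^*$ is the adjoint of the inclusion $\sigma wc(\mathfrak{C})\hookrightarrow\mathfrak{C}$. $\mathfrak{C}$ is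 weakly Connes amenable if for every derivation $D:\mathfrak{C}\to\mathfrak{C}^*$ such that $j_{\mathfrak{C}}\circ D:\mathfrak{C}\to\sigma wc(\mathfrak{C})^*$ is $w^*$-$w^*$ continuous, the derivation $j_{\mathfrak{C}}\circ D$ is inner. *)

theory Defs
  imports "HOL-Analysis.Analysis"
begin

text \<open>Normed spaces over a scalar field 'k (real or complex) are given by an explicit
  scalar multiplication sc and an explicit norm N, so that the l1-norm of a direct sum
  and the sup-norm of its predual can be used literally.\<close>

definition normed_sp :: "('k::real_normed_field \<Rightarrow> 'a::ab_group_add \<Rightarrow> 'a) \<Rightarrow> ('a \<Rightarrow> real) \<Rightarrow> bool" where
  "normed_sp sc N \<longleftrightarrow> vector_space sc \<and> (\<forall>x. 0 \<le> N x) \<and> (\<forall>x. N x = 0 \<longleftrightarrow> x = 0)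
     \<and> (\<forall>x y. N (x + y) \<le> N x + N y) \<and> (\<forall>c x. N (sc c x) = norm c * N x)"

definition complete_sp :: "('a::ab_group_add \<Rightarrow> real) \<Rightarrow> bool" where
  "complete_sp N \<longleftrightarrow> (\<forall>X::nat \<Rightarrow> 'a.
     (\<forall>e>0. \<exists>M. \<forall>m\<ge>M. \<forall>n\<ge>M. N (X m - X n) < e) \<longrightarrow> (\<exists>L. \<forall>e>0. \<exists>M. \<forall>n\<ge>M. N (X n - L) < e))"

definition banach_sp :: "('k::real_normed_field \<Rightarrow> 'a::ab_group_add \<Rightarrow> 'a) \<Rightarrow> ('a \<Rightarrow> real) \<Rightarrow> bool" where
  "banach_sp sc N \<longleftrightarrow> normed_sp sc N \<and> complete_sp N"

definition bdd_functional :: "('k::real_normed_field \<Rightarrow> 'a::ab_group_add \<Rightarrow> 'a) \<Rightarrow> ('a \<Rightarrow> real) \<Rightarrow> ('a \<Rightarrow> 'k) \<Rightarrow> bool" where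
  "bdd_functional sc N f \<longleftrightarrow> (\<forall>x y. f (x + y) = f x + f y) \<and> (\<forall>c x. f (sc c x) = c * f x)
     \<and> (\<exists>K. \<forall>x. norm (f x) \<le> K * N x)"

definition is_dual_of :: "('k::real_normed_field \<Rightarrow> 'a::ab_group_add \<Rightarrow> 'a) \<Rightarrow> ('a \<Rightarrow> real)
    \<Rightarrow> ('k \<Rightarrow> 'p::ab_group_add \<Rightarrow> 'p) \<Rightarrow> ('p \<Rightarrow> real) \<Rightarrow> ('a \<Rightarrow> 'p \<Rightarrow> 'k) \<Rightarrow> bool" where
  "is_dual_of sc N scp Np P \<longleftrightarrow>
     (\<forall>a. bdd_functional scp Np (P a))
   \<and> (\<forall>a b \<phi>. P (a + b) \<phi> = P a \<phi> + P b \<phi>) \<and> (\<forall>c a \<phi>. P (sc c a) \<phi> = c * P a \<phi>)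
   \<and> (\<forall>a. N a = (SUP \<phi>\<in>{\<phi>. Np \<phi> \<le> 1}. norm (P a \<phi>)))
   \<and> (\<forall>f. bdd_functional scp Np f \<longrightarrow> (\<exists>a. P a = f))"

definition wstar_top :: "('a \<Rightarrow> 'p \<Rightarrow> 'k::real_normed_field) \<Rightarrow> 'a topology" where
  "wstar_top P = topology_generated_by {{a. P a \<phi> \<in> U} | \<phi> U. open U}"

definition weak_top :: "('k::real_normed_field \<Rightarrow> 'a::ab_group_add \<Rightarrow> 'a) \<Rightarrow> ('a \<Rightarrow> real) \<Rightarrow> 'a topology" where
  "weak_top sc N = topology_generated_by {{a. f a \<in> U} | f U. bdd_functional sc N f \<and> open U}"

definition dual_banach_algebra ::
  "('k::real_normed_field \<Rightarrow> 'a::ab_group_add \<Rightarrow> 'a) \<Rightarrow> ('a \<Rightarrow> real) \<Rightarrow> ('a \<Rightarrow> 'a \<Rightarrow> 'a)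
    \<Rightarrow> ('k \<Rightarrow> 'p::ab_group_add \<Rightarrow> 'p) \<Rightarrow> ('p \<Rightarrow> real) \<Rightarrow> ('a \<Rightarrow> 'p \<Rightarrow> 'k) \<Rightarrow> bool" where
  "dual_banach_algebra sc N mul scp Np P \<longleftrightarrow>
     banach_sp sc N
   \<and> (\<forall>x y z. mul (mul x y) z = mul x (mul y z))
   \<and> (\<forall>x y z. mul (x + y) z = mul x z + mul y z) \<and> (\<forall>x y z. mul x (y + z) = mul x y + mul x z)
   \<and> (\<forall>c x y. mul (sc c x) y = sc c (mul x y)) \<and> (\<forall>c x y. mul x (sc c y) = sc c (mul x y))
   \<and> (\<forall>x y. N (mul x y) \<le> N x * N y)
   \<and> banach_sp scp Np \<and> is_dual_of sc N scp Np P
   \<and> (\<forall>a. continuous_map (wstar_top P) (wstar_top P) (\<lambda>x. mul a x))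
   \<and> (\<forall>a. continuous_map (wstar_top P) (wstar_top P) (\<lambda>x. mul x a))"

definition sigma_wc :: "('k::real_normed_field \<Rightarrow> 'a::ab_group_add \<Rightarrow> 'a) \<Rightarrow> ('a \<Rightarrow> real) \<Rightarrow> ('a \<Rightarrow> 'a \<Rightarrow> 'a)
    \<Rightarrow> ('a \<Rightarrow> 'p \<Rightarrow> 'k) \<Rightarrow> 'a set" where
  "sigma_wc sc N mul P = {x. continuous_map (wstar_top P) (weak_top sc N) (\<lambda>c. mul c x)
                            \<and> continuous_map (wstar_top P) (weak_top sc N) (\<lambda>c. mul x c)}"

text \<open>Derivations D : C \<rightarrow> C*, where (a\<cdot>f)(b) = f(b a) and (f\<cdot>a)(b) = f(a b);
  D x is the functional D x (applied to z as D x z).\<close>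
definition dual_derivation :: "('k::real_normed_field \<Rightarrow> 'a::ab_group_add \<Rightarrow> 'a) \<Rightarrow> ('a \<Rightarrow> real) \<Rightarrow> ('a \<Rightarrow> 'a \<Rightarrow> 'a)
    \<Rightarrow> ('a \<Rightarrow> 'a \<Rightarrow> 'k) \<Rightarrow> bool" where
  "dual_derivation sc N mul D \<longleftrightarrow>
     (\<forall>x. bdd_functional sc N (D x))
   \<and> (\<forall>x y z. D (x + y) z = D x z + D y z) \<and> (\<forall>c x z. D (sc c x) z = c * D x z)
   \<and> (\<exists>K. \<forall>x z. norm (D x z) \<le> K * N x * N z)
   \<and> (\<forall>x y z. D (mul x y) z = D x (mul y z) + D y (mul z x))"

definition weakly_connes_amenable ::
  "('k::real_normed_field \<Rightarrow> 'a::ab_group_add \<Rightarrow> 'a) \<Rightarrow> ('a \<Rightarrow> real) \<Rightarrow> ('a \<Rightarrow> 'a \<Rightarrow> 'a)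
    \<Rightarrow> ('a \<Rightarrow> 'p \<Rightarrow> 'k) \<Rightarrow> bool" where
  "weakly_connes_amenable sc N mul P \<longleftrightarrow>
     (\<forall>D. dual_derivation sc N mul D
        \<and> (\<forall>y\<in>sigma_wc sc N mul P. continuous_map (wstar_top P) euclidean (\<lambda>c. D c y))
      \<longrightarrow> (\<exists>f. (\<forall>x\<in>sigma_wc sc N mul P. \<forall>y\<in>sigma_wc sc N mul P. f (x + y) = f x + f y)
             \<and> (\<forall>c. \<forall>x\<in>sigma_wc sc N mul P. f (sc c x) = c * f x)
             \<and> (\<exists>K. \<forall>x\<in>sigma_wc sc N mul P. norm (f x) \<le> K * N x)
             \<and> (\<forall>c. \<forall>y\<in>sigma_wc sc N mul P. D c y = f (mul y c) - f (mul c y))))"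

definition sq_wstar_dense :: "('k::real_normed_field \<Rightarrow> 'a::ab_group_add \<Rightarrow> 'a) \<Rightarrow> ('a \<Rightarrow> 'a \<Rightarrow> 'a)
    \<Rightarrow> ('a \<Rightarrow> 'p \<Rightarrow> 'k) \<Rightarrow> bool" where
  "sq_wstar_dense sc mul P \<longleftrightarrow> (wstar_top P) closure_of (module.span sc {mul a b | a b. True}) = UNIV"

definition sum_sc :: "('k \<Rightarrow> 'a \<Rightarrow> 'a) \<Rightarrow> ('k \<Rightarrow> 'b \<Rightarrow> 'b) \<Rightarrow> 'k \<Rightarrow> 'a \<times> 'b \<Rightarrow> 'a \<times> 'b" where
  "sum_sc sa sb c x = (sa c (fst x), sb c (snd x))"
definition l1_norm :: "('a \<Rightarrow> real) \<Rightarrow> ('b \<Rightarrow> real) \<Rightarrow> 'a \<times> 'b \<Rightarrow> real" where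
  "l1_norm Na Nb x = Na (fst x) + Nb (snd x)"
definition linf_norm :: "('a \<Rightarrow> real) \<Rightarrow> ('b \<Rightarrow> real) \<Rightarrow> 'a \<times> 'b \<Rightarrow> real" where
  "linf_norm Na Nb x = max (Na (fst x)) (Nb (snd x))"
definition sum_mul :: "('a \<Rightarrow> 'a \<Rightarrow> 'a) \<Rightarrow> ('b \<Rightarrow> 'b \<Rightarrow> 'b) \<Rightarrow> 'a \<times> 'b \<Rightarrow> 'a \<times> 'b \<Rightarrow> 'a \<times> 'b" where
  "sum_mul ma mb x y = (ma (fst x) (fst y), mb (snd x) (snd y))"
definition sum_pair :: "('a \<Rightarrow> 'p \<Rightarrow> 'k::plus) \<Rightarrow> ('b \<Rightarrow> 'q \<Rightarrow> 'k) \<Rightarrow> 'a \<times> 'b \<Rightarrow> 'p \<times> 'q \<Rightarrow> 'k" where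
  "sum_pair Pa Pb x \<phi> = Pa (fst x) (fst \<phi>) + Pb (snd x) (snd \<phi>)"

end

theory Submission
  imports Defs
begin

(* A derivation D of A +1 B into its dual splits into four corners. The diagonal corners
   D (a, 0) (z, 0) and D (0, b) (0, z) are derivations of A and B into their duals satisfying the
   same w*-continuity hypothesis, because sigma wc(A +1 B) = sigma wc(A) x sigma wc(B); weak Connes
   amenability of A and B provides functionals fA and fB implementing them. An off-diagonal corner
   a \<mapsto> D (a, 0) (0, b) is a w*-continuous linear functional on A vanishing on products, since
   (a, 0)(0, b) = 0 = (0, b)(a, 0) turns the Leibniz rule into D (a a', 0) (0, b) = 0; by w*-density
   of A^2 it vanishes identically. Hence fA \<circ> fst + fB \<circ> snd implements j \<circ> D. *)

definition initial_top :: "('a \<Rightarrow> 'k::topological_space) set \<Rightarrow> 'a topology" where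
  "initial_top F = topology_generated_by {{a. f a \<in> U} | f U. f \<in> F \<and> open U}"

lemma topspace_initial_top [simp]: "F \<noteq> {} \<Longrightarrow> topspace (initial_top F) = UNIV"
  unfolding initial_top_def topology_generated_by_topspace by blast

lemma continuous_map_initial_top_iff:
  fixes F :: "('a \<Rightarrow> 'k::topological_space) set"
  assumes "F \<noteq> {}"
  shows "continuous_map X (initial_top F) g \<longleftrightarrow> (\<forall>f\<in>F. continuous_map X euclidean (f \<circ> g))"
proof -
  have preimage: "g -` {a. f a \<in> U} \<inter> topspace X = {x \<in> topspace X. (f \<circ> g) x \<in> U}"
    for f :: "'a \<Rightarrow> 'k" and U
    by auto
  have "(\<forall>V\<in>{{a. f a \<in> U} | f U. f \<in> F \<and> open U}. openin X (g -` V \<inter> topspace X))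
      \<longleftrightarrow> (\<forall>f\<in>F. \<forall>U. open U \<longrightarrow> openin X {x \<in> topspace X. (f \<circ> g) x \<in> U})"
    unfolding preimage[symmetric] by blast
  moreover have "g ` topspace X \<subseteq> topspace (initial_top F)" using assms by simp
  ultimately show ?thesis
    unfolding initial_top_def continuous_on_generated_topo_iff
    unfolding continuous_map_def by simp
qed

lemma continuous_map_initial_top_member:
  assumes "f \<in> F"
  shows "continuous_map (initial_top F) euclidean f"
proof -
  have "F \<noteq> {}" using assms by blast
  moreover have "continuous_map (initial_top F) (initial_top F) id" by simp
  ultimately have "continuous_map (initial_top F) euclidean (f \<circ> id)"
    using continuous_map_initial_top_iff[of F "initial_top F" id] assms by simp
  then show ?thesis by simp
qed

lemma wstar_top_eq_initial_top: "wstar_top P = initial_top (range (\<lambda>\<phi> a. P a \<phi>))"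
proof -
  have "{{a. P a \<phi> \<in> U} | \<phi> U. open U} = {{a. f a \<in> U} | f U. f \<in> range (\<lambda>\<phi> a. P a \<phi>) \<and> open U}"
    by (auto simp: image_iff) (metis (no_types))
  then show ?thesis unfolding wstar_top_def initial_top_def by simp
qed

lemma weak_top_eq_initial_top: "weak_top sc N = initial_top (Collect (bdd_functional sc N))"
  unfolding weak_top_def initial_top_def by simp

lemma topspace_wstar_top [simp]: "topspace (wstar_top P) = UNIV"
  unfolding wstar_top_eq_initial_top by simp

lemma continuous_map_wstar_topI:
  assumes "\<And>\<phi>. \<exists>\<psi>. \<forall>a. P' (g a) \<phi> = P a \<psi>"
  shows "continuous_map (wstar_top P) (wstar_top P') g"
proof -
  have "(\<lambda>a. P' a \<phi>) \<circ> g \<in> range (\<lambda>\<psi> a. P a \<psi>)" for \<phi>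
    using assms[of \<phi>] by (auto simp: o_def)
  then show ?thesis
    unfolding wstar_top_eq_initial_top
    by (subst continuous_map_initial_top_iff) (auto intro: continuous_map_initial_top_member)
qed

definition bdd_linear_map ::
  "('k::real_normed_field \<Rightarrow> 'a::ab_group_add \<Rightarrow> 'a) \<Rightarrow> ('a \<Rightarrow> real)
    \<Rightarrow> ('k \<Rightarrow> 'b::ab_group_add \<Rightarrow> 'b) \<Rightarrow> ('b \<Rightarrow> real) \<Rightarrow> ('a \<Rightarrow> 'b) \<Rightarrow> bool" where
  "bdd_linear_map sc N sc' N' g \<longleftrightarrow> (\<forall>x y. g (x + y) = g x + g y) \<and> (\<forall>c x. g (sc c x) = sc' c (g x))
     \<and> (\<exists>K. \<forall>x. N' (g x) \<le> K * N x)"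

lemma bdd_functional_compose:
  assumes f: "bdd_functional sc' N' f" and g: "bdd_linear_map sc N sc' N' g"
    and N': "\<And>y. 0 \<le> N' y"
  shows "bdd_functional sc N (f \<circ> g)"
proof -
  obtain Kf where Kf: "\<And>y. norm (f y) \<le> Kf * N' y" using f unfolding bdd_functional_def by blast
  obtain Kg where Kg: "\<And>x. N' (g x) \<le> Kg * N x" using g unfolding bdd_linear_map_def by blast
  have bound: "norm (f (g x)) \<le> (max Kf 0 * Kg) * N x" for x
  proof -
    have "norm (f (g x)) \<le> max Kf 0 * N' (g x)"
      using Kf[of "g x"] mult_right_mono[OF max.cobounded1 N'] by (rule order_trans)
    also have "\<dots> \<le> max Kf 0 * (Kg * N x)" by (intro mult_left_mono Kg) simp
    finally show ?thesis by (simp add: mult.assoc)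
  qed
  have "f (g (x + y)) = f (g x) + f (g y)" "f (g (sc c x)) = c * f (g x)" for c x y
    using f g unfolding bdd_functional_def bdd_linear_map_def by simp_all
  with bound show ?thesis unfolding bdd_functional_def o_def by blast
qed

lemma bdd_functional_zero: "bdd_functional sc N (\<lambda>x. 0)"
  unfolding bdd_functional_def by (auto intro: exI[of _ 0])

lemma continuous_map_weak_top_bdd_linear_map:
  assumes "bdd_linear_map sc N sc' N' g" and "\<And>y. 0 \<le> N' y"
  shows "continuous_map (weak_top sc N) (weak_top sc' N') g"
proof -
  have "Collect (bdd_functional sc' N') \<noteq> {}" using bdd_functional_zero by blast
  moreover have "f \<circ> g \<in> Collect (bdd_functional sc N)" if "f \<in> Collect (bdd_functional sc' N')" for f
    using that bdd_functional_compose assms by blast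
  ultimately show ?thesis
    unfolding weak_top_eq_initial_top
    by (simp add: continuous_map_initial_top_iff continuous_map_initial_top_member)
qed

lemma dual_banach_algebra_vector_space:
  "dual_banach_algebra sc N mul scp Np P \<Longrightarrow> vector_space sc"
  unfolding dual_banach_algebra_def banach_sp_def normed_sp_def by blast

lemma dual_banach_algebra_simps:
  assumes "dual_banach_algebra sc N mul scp Np P"
  shows "sc c 0 = 0" "N 0 = 0" "0 \<le> N x" "mul x 0 = 0" "mul 0 x = 0" "P 0 \<phi> = 0" "P a 0 = 0"
proof -
  have N: "normed_sp sc N" and mul: "\<forall>x y z. mul (x + y) z = mul x z + mul y z"
      "\<forall>x y z. mul x (y + z) = mul x y + mul x z"
    and P: "is_dual_of sc N scp Np P"
    using assms unfolding dual_banach_algebra_def banach_sp_def by auto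
  show "sc c 0 = 0"
    using dual_banach_algebra_vector_space[OF assms]
    by (simp add: module.scale_zero_right module_iff_vector_space[symmetric])
  show "N 0 = 0" "0 \<le> N x" using N unfolding normed_sp_def by auto
  show "mul x 0 = 0" "mul 0 x = 0" using mul by (metis add_cancel_right_right)+
  show "P 0 \<phi> = 0" "P a 0 = 0"
    using P unfolding is_dual_of_def bdd_functional_def by (metis add_cancel_right_right)+
qed

lemma dual_derivation_simps:
  assumes "dual_derivation sc N mul D"
  shows "D x (z + w) = D x z + D x w" "D x (sc c z) = c * D x z" "D x 0 = 0"
    "D (x + y) z = D x z + D y z" "D (sc c x) z = c * D x z"
    "D (mul x y) z = D x (mul y z) + D y (mul z x)"
  using assms unfolding dual_derivation_def bdd_functional_def
  by (auto simp del: add_0) (metis add_cancel_right_right)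

lemma sigma_wc_transfer:
  assumes y: "y \<in> sigma_wc sc N mul P"
    and s: "continuous_map (wstar_top P') (wstar_top P) s"
    and t: "continuous_map (weak_top sc N) (weak_top sc' N') t"
    and "\<And>c. mul' c y' = t (mul (s c) y)" and "\<And>c. mul' y' c = t (mul y (s c))"
  shows "y' \<in> sigma_wc sc' N' mul' P'"
proof -
  have compose: "continuous_map (wstar_top P') (weak_top sc' N') (t \<circ> (m \<circ> s))"
    if "continuous_map (wstar_top P) (weak_top sc N) m" for m
    using continuous_map_compose[OF continuous_map_compose[OF s that] t] .
  have "(\<lambda>c. mul' c y') = t \<circ> ((\<lambda>c. mul c y) \<circ> s)" "(\<lambda>c. mul' y' c) = t \<circ> ((\<lambda>c. mul y c) \<circ> s)"
    using assms(4,5) by auto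
  then show ?thesis
    using y compose[of "\<lambda>c. mul c y"] compose[of "\<lambda>c. mul y c"] unfolding sigma_wc_def by simp
qed

lemma dual_derivation_pullback:
  assumes D: "dual_derivation sc N mul D" and \<iota>: "bdd_linear_map sc' N' sc N \<iota>"
    and hom: "\<And>x y. \<iota> (mul' x y) = mul (\<iota> x) (\<iota> y)" and N_nonneg: "\<And>x. 0 \<le> N x"
  shows "dual_derivation sc' N' mul' (\<lambda>a z. D (\<iota> a) (\<iota> z))"
proof -
  obtain KD where KD: "\<And>x z. norm (D x z) \<le> KD * N x * N z"
    using D unfolding dual_derivation_def by blast
  obtain K where K: "\<And>x. N (\<iota> x) \<le> K * N' x" using \<iota> unfolding bdd_linear_map_def by blast
  have K': "N (\<iota> x) \<le> K * N' x" "0 \<le> K * N' x" for x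
    using K[of x] N_nonneg[of "\<iota> x"] by auto
  have bound: "norm (D (\<iota> a) (\<iota> z)) \<le> (max KD 0 * K * K) * N' a * N' z" for a z
  proof -
    have "norm (D (\<iota> a) (\<iota> z)) \<le> max KD 0 * N (\<iota> a) * N (\<iota> z)"
      using KD[of "\<iota> a" "\<iota> z"] by (rule order_trans) (simp add: mult_right_mono N_nonneg)
    also have "\<dots> \<le> (max KD 0 * (K * N' a)) * (K * N' z)"
      using K' N_nonneg by (intro mult_mono mult_left_mono) auto
    finally show ?thesis by (simp only: ac_simps)
  qed
  have "bdd_functional sc' N' (\<lambda>z. D (\<iota> a) (\<iota> z))" for a
    using bdd_functional_compose[of sc N "D (\<iota> a)" sc' N' \<iota>] D \<iota> N_nonneg
    unfolding dual_derivation_def by (simp add: o_def)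
  moreover have "\<iota> (x + y) = \<iota> x + \<iota> y" "\<iota> (sc' c x) = sc c (\<iota> x)" for c x y
    using \<iota> unfolding bdd_linear_map_def by auto
  ultimately show ?thesis
    unfolding dual_derivation_def
    by (intro conjI allI exI[of _ "max KD 0 * K * K"] bound) (simp_all add: dual_derivation_simps[OF D] hom)
qed

text \<open>For S = sigma_wc C this says that j_C \<circ> D is the inner derivation implemented by
  f \<in> sigma_wc(C)^*.\<close>
definition inner_on :: "('k::real_normed_field \<Rightarrow> 'a::ab_group_add \<Rightarrow> 'a) \<Rightarrow> ('a \<Rightarrow> real)
    \<Rightarrow> ('a \<Rightarrow> 'a \<Rightarrow> 'a) \<Rightarrow> 'a set \<Rightarrow> ('a \<Rightarrow> 'a \<Rightarrow> 'k) \<Rightarrow> ('a \<Rightarrow> 'k) \<Rightarrow> bool" where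
  "inner_on sc N mul S D f \<longleftrightarrow>
     (\<forall>x\<in>S. \<forall>y\<in>S. f (x + y) = f x + f y) \<and> (\<forall>c. \<forall>x\<in>S. f (sc c x) = c * f x)
   \<and> (\<exists>K. \<forall>x\<in>S. norm (f x) \<le> K * N x) \<and> (\<forall>c. \<forall>y\<in>S. D c y = f (mul y c) - f (mul c y))"

lemma weakly_connes_amenable_iff_inner_on:
  "weakly_connes_amenable sc N mul P \<longleftrightarrow>
     (\<forall>D. dual_derivation sc N mul D
        \<and> (\<forall>y\<in>sigma_wc sc N mul P. continuous_map (wstar_top P) euclidean (\<lambda>c. D c y))
      \<longrightarrow> (\<exists>f. inner_on sc N mul (sigma_wc sc N mul P) D f))"
  unfolding weakly_connes_amenable_def inner_on_def ..

lemma weakly_connes_amenable_pullback_inner_on: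
  assumes wca: "weakly_connes_amenable sc' N' mul' P'"
    and D: "dual_derivation sc N mul D"
    and cont_D: "\<forall>y\<in>sigma_wc sc N mul P. continuous_map (wstar_top P) euclidean (\<lambda>c. D c y)"
    and \<iota>: "bdd_linear_map sc' N' sc N \<iota>" and hom: "\<And>x y. \<iota> (mul' x y) = mul (\<iota> x) (\<iota> y)"
    and N_nonneg: "\<And>x. 0 \<le> N x"
    and cont_\<iota>: "continuous_map (wstar_top P') (wstar_top P) \<iota>"
    and sigma_\<iota>: "\<And>y. y \<in> sigma_wc sc' N' mul' P' \<Longrightarrow> \<iota> y \<in> sigma_wc sc N mul P"
  obtains f where "inner_on sc' N' mul' (sigma_wc sc' N' mul' P') (\<lambda>a z. D (\<iota> a) (\<iota> z)) f"
proof -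
  have "continuous_map (wstar_top P') euclidean (\<lambda>c. D (\<iota> c) (\<iota> y))"
    if "y \<in> sigma_wc sc' N' mul' P'" for y
    using continuous_map_compose[OF cont_\<iota> cont_D[rule_format, OF sigma_\<iota>[OF that]]]
    by (simp add: o_def)
  moreover have "dual_derivation sc' N' mul' (\<lambda>a z. D (\<iota> a) (\<iota> z))"
    by (rule dual_derivation_pullback[of sc N mul D sc' N' \<iota> mul', OF D \<iota> hom N_nonneg])
  ultimately have "\<exists>f. inner_on sc' N' mul' (sigma_wc sc' N' mul' P') (\<lambda>a z. D (\<iota> a) (\<iota> z)) f"
    using wca[unfolded weakly_connes_amenable_iff_inner_on, THEN spec[where x = "\<lambda>a z. D (\<iota> a) (\<iota> z)"]]
    by simp
  then show ?thesis using that by blast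
qed

lemma linear_functional_vanishing_on_products_eq_0:
  fixes h :: "'a::ab_group_add \<Rightarrow> 'k::real_normed_field"
  assumes vs: "vector_space sc" and dense: "sq_wstar_dense sc mul P"
    and cont: "continuous_map (wstar_top P) euclidean h"
    and add: "\<And>x y. h (x + y) = h x + h y" and scale: "\<And>c x. h (sc c x) = c * h x"
    and prod: "\<And>x y. h (mul x y) = 0"
  shows "h a = 0"
proof -
  have "h 0 = 0" using add by (metis add_cancel_right_right)
  have "h x = 0" if "x \<in> module.span sc {mul a b | a b. True}" for x
    using vs[unfolded module_iff_vector_space[symmetric]] that
    by (rule module.span_induct_alt[where h = "\<lambda>x. h x = 0"]) (auto simp: add scale prod \<open>h 0 = 0\<close>)
  then have "module.span sc {mul a b | a b. True} \<subseteq> {a. h a = 0}" by blast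
  moreover have "closedin (wstar_top P) {a. h a = 0}"
    using closedin_continuous_map_preimage[OF cont, of "{0}"] by simp
  ultimately have "(wstar_top P) closure_of (module.span sc {mul a b | a b. True}) \<subseteq> {a. h a = 0}"
    by (rule closure_of_minimal)
  with dense show ?thesis unfolding sq_wstar_dense_def by auto
qed

lemma dual_derivation_vanishes_on_annihilator:
  assumes D: "dual_derivation sc N mul D"
    and vs: "vector_space sc'" and dense: "sq_wstar_dense sc' mul' P'"
    and \<iota>: "bdd_linear_map sc' N' sc N \<iota>" and hom: "\<And>x y. \<iota> (mul' x y) = mul (\<iota> x) (\<iota> y)"
    and cont_\<iota>: "continuous_map (wstar_top P') (wstar_top P) \<iota>"
    and cont_D: "continuous_map (wstar_top P) euclidean (\<lambda>c. D c z)"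
    and annihilates: "\<And>x. mul (\<iota> x) z = 0" "\<And>x. mul z (\<iota> x) = 0"
  shows "D (\<iota> a) z = 0"
proof (rule linear_functional_vanishing_on_products_eq_0[OF vs dense, where h = "\<lambda>a. D (\<iota> a) z"])
  show "continuous_map (wstar_top P') euclidean (\<lambda>a. D (\<iota> a) z)"
    using continuous_map_compose[OF cont_\<iota> cont_D] by (simp add: o_def)
  show "D (\<iota> (x + y)) z = D (\<iota> x) z + D (\<iota> y) z" "D (\<iota> (sc' c x)) z = c * D (\<iota> x) z" for c x y
    using \<iota> dual_derivation_simps[OF D] unfolding bdd_linear_map_def by auto
  show "D (\<iota> (mul' x y)) z = 0" for x y
    using dual_derivation_simps[OF D] by (simp add: hom annihilates)
qed

locale dual_banach_algebra_pair =
  fixes scA :: "'k::real_normed_field \<Rightarrow> 'a::ab_group_add \<Rightarrow> 'a"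
    and NA :: "'a \<Rightarrow> real" and mulA :: "'a \<Rightarrow> 'a \<Rightarrow> 'a"
    and scAp :: "'k \<Rightarrow> 'p::ab_group_add \<Rightarrow> 'p" and NAp :: "'p \<Rightarrow> real" and PA :: "'a \<Rightarrow> 'p \<Rightarrow> 'k"
    and scB :: "'k \<Rightarrow> 'b::ab_group_add \<Rightarrow> 'b"
    and NB :: "'b \<Rightarrow> real" and mulB :: "'b \<Rightarrow> 'b \<Rightarrow> 'b"
    and scBp :: "'k \<Rightarrow> 'q::ab_group_add \<Rightarrow> 'q" and NBp :: "'q \<Rightarrow> real" and PB :: "'b \<Rightarrow> 'q \<Rightarrow> 'k"
  assumes A: "dual_banach_algebra scA NA mulA scAp NAp PA"
    and B: "dual_banach_algebra scB NB mulB scBp NBp PB"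
begin

declare dual_banach_algebra_simps[OF A, simp] dual_banach_algebra_simps[OF B, simp]

abbreviation sigma_wc_sum :: "('a \<times> 'b) set" where
  "sigma_wc_sum \<equiv> sigma_wc (sum_sc scA scB) (l1_norm NA NB) (sum_mul mulA mulB) (sum_pair PA PB)"

lemma bdd_linear_map_inl: "bdd_linear_map scA NA (sum_sc scA scB) (l1_norm NA NB) (\<lambda>a. (a, 0))"
  unfolding bdd_linear_map_def by (auto simp: sum_sc_def l1_norm_def intro: exI[of _ 1])

lemma bdd_linear_map_inr: "bdd_linear_map scB NB (sum_sc scA scB) (l1_norm NA NB) (\<lambda>b. (0, b))"
  unfolding bdd_linear_map_def by (auto simp: sum_sc_def l1_norm_def intro: exI[of _ 1])

lemma bdd_linear_map_fst: "bdd_linear_map (sum_sc scA scB) (l1_norm NA NB) scA NA fst"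
  unfolding bdd_linear_map_def by (auto simp: sum_sc_def l1_norm_def intro: exI[of _ 1])

lemma bdd_linear_map_snd: "bdd_linear_map (sum_sc scA scB) (l1_norm NA NB) scB NB snd"
  unfolding bdd_linear_map_def by (auto simp: sum_sc_def l1_norm_def intro: exI[of _ 1])

lemma l1_norm_nonneg: "0 \<le> l1_norm NA NB x"
  by (simp add: l1_norm_def)

lemma continuous_map_wstar_inl:
  "continuous_map (wstar_top PA) (wstar_top (sum_pair PA PB)) (\<lambda>a. (a, 0))"
  by (rule continuous_map_wstar_topI) (auto simp: sum_pair_def)

lemma continuous_map_wstar_inr:
  "continuous_map (wstar_top PB) (wstar_top (sum_pair PA PB)) (\<lambda>b. (0, b))"
  by (rule continuous_map_wstar_topI) (auto simp: sum_pair_def)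

lemma continuous_map_wstar_fst: "continuous_map (wstar_top (sum_pair PA PB)) (wstar_top PA) fst"
proof (rule continuous_map_wstar_topI)
  show "\<exists>\<psi>. \<forall>x. PA (fst x) \<phi> = sum_pair PA PB x \<psi>" for \<phi>
    by (intro exI[of _ "(\<phi>, 0)"]) (simp add: sum_pair_def)
qed

lemma continuous_map_wstar_snd: "continuous_map (wstar_top (sum_pair PA PB)) (wstar_top PB) snd"
proof (rule continuous_map_wstar_topI)
  show "\<exists>\<psi>. \<forall>x. PB (snd x) \<phi> = sum_pair PA PB x \<psi>" for \<phi>
    by (intro exI[of _ "(0, \<phi>)"]) (simp add: sum_pair_def)
qed

lemma sigma_wc_sum_inl: "y \<in> sigma_wc scA NA mulA PA \<Longrightarrow> (y, 0) \<in> sigma_wc_sum"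
  by (erule sigma_wc_transfer[OF _ continuous_map_wstar_fst
        continuous_map_weak_top_bdd_linear_map[OF bdd_linear_map_inl l1_norm_nonneg]])
    (simp_all add: sum_mul_def)

lemma sigma_wc_sum_inr: "y \<in> sigma_wc scB NB mulB PB \<Longrightarrow> (0, y) \<in> sigma_wc_sum"
  by (erule sigma_wc_transfer[OF _ continuous_map_wstar_snd
        continuous_map_weak_top_bdd_linear_map[OF bdd_linear_map_inr l1_norm_nonneg]])
    (simp_all add: sum_mul_def)

lemma sigma_wc_sum_fst: "x \<in> sigma_wc_sum \<Longrightarrow> fst x \<in> sigma_wc scA NA mulA PA"
  by (erule sigma_wc_transfer[OF _ continuous_map_wstar_inl
        continuous_map_weak_top_bdd_linear_map[OF bdd_linear_map_fst]])
    (simp_all add: sum_mul_def)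

lemma sigma_wc_sum_snd: "x \<in> sigma_wc_sum \<Longrightarrow> snd x \<in> sigma_wc scB NB mulB PB"
  by (erule sigma_wc_transfer[OF _ continuous_map_wstar_inr
        continuous_map_weak_top_bdd_linear_map[OF bdd_linear_map_snd]])
    (simp_all add: sum_mul_def)

context
  fixes D :: "'a \<times> 'b \<Rightarrow> 'a \<times> 'b \<Rightarrow> 'k"
  assumes D: "dual_derivation (sum_sc scA scB) (l1_norm NA NB) (sum_mul mulA mulB) D"
    and cont_D: "\<forall>y\<in>sigma_wc_sum. continuous_map (wstar_top (sum_pair PA PB)) euclidean (\<lambda>c. D c y)"
begin

lemma inner_on_inl_corner:
  assumes "weakly_connes_amenable scA NA mulA PA"
  obtains fA where "inner_on scA NA mulA (sigma_wc scA NA mulA PA) (\<lambda>a z. D (a, 0) (z, 0)) fA"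
  by (rule weakly_connes_amenable_pullback_inner_on[OF assms D cont_D bdd_linear_map_inl _
        l1_norm_nonneg continuous_map_wstar_inl sigma_wc_sum_inl]) (simp_all add: sum_mul_def)

lemma inner_on_inr_corner:
  assumes "weakly_connes_amenable scB NB mulB PB"
  obtains fB where "inner_on scB NB mulB (sigma_wc scB NB mulB PB) (\<lambda>b z. D (0, b) (0, z)) fB"
  by (rule weakly_connes_amenable_pullback_inner_on[OF assms D cont_D bdd_linear_map_inr _
        l1_norm_nonneg continuous_map_wstar_inr sigma_wc_sum_inr]) (simp_all add: sum_mul_def)

lemma dual_derivation_inl_inr_eq_0:
  assumes "sq_wstar_dense scA mulA PA" and "(0, b) \<in> sigma_wc_sum"
  shows "D (a, 0) (0, b) = 0"
  by (rule dual_derivation_vanishes_on_annihilator[OF D dual_banach_algebra_vector_space[OF A]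
        assms(1) bdd_linear_map_inl _ continuous_map_wstar_inl cont_D[rule_format, OF assms(2)]])
    (simp_all add: sum_mul_def zero_prod_def)

lemma dual_derivation_inr_inl_eq_0:
  assumes "sq_wstar_dense scB mulB PB" and "(a, 0) \<in> sigma_wc_sum"
  shows "D (0, b) (a, 0) = 0"
  by (rule dual_derivation_vanishes_on_annihilator[OF D dual_banach_algebra_vector_space[OF B]
        assms(1) bdd_linear_map_inr _ continuous_map_wstar_inr cont_D[rule_format, OF assms(2)]])
    (simp_all add: sum_mul_def zero_prod_def)

lemma dual_derivation_sum_split:
  assumes "\<And>a. D (a, 0) (0, snd y) = 0" and "\<And>b. D (0, b) (fst y, 0) = 0"
  shows "D c y = D (fst c, 0) (fst y, 0) + D (0, snd c) (0, snd y)"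
proof -
  have "D c y = D ((fst c, 0) + (0, snd c)) ((fst y, 0) + (0, snd y))" by simp
  also have "\<dots> = D (fst c, 0) (fst y, 0) + D (fst c, 0) (0, snd y)
      + (D (0, snd c) (fst y, 0) + D (0, snd c) (0, snd y))"
    by (simp only: dual_derivation_simps[OF D]) (simp only: ac_simps)
  finally show ?thesis using assms by simp
qed

lemma inner_on_sum:
  assumes fA: "inner_on scA NA mulA (sigma_wc scA NA mulA PA) (\<lambda>a z. D (a, 0) (z, 0)) fA"
    and fB: "inner_on scB NB mulB (sigma_wc scB NB mulB PB) (\<lambda>b z. D (0, b) (0, z)) fB"
    and cross_inl_inr: "\<And>a b. (0, b) \<in> sigma_wc_sum \<Longrightarrow> D (a, 0) (0, b) = 0"
    and cross_inr_inl: "\<And>a b. (a, 0) \<in> sigma_wc_sum \<Longrightarrow> D (0, b) (a, 0) = 0"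
  shows "inner_on (sum_sc scA scB) (l1_norm NA NB) (sum_mul mulA mulB) sigma_wc_sum D
    (\<lambda>x. fA (fst x) + fB (snd x))"
proof -
  let ?SA = "sigma_wc scA NA mulA PA" and ?SB = "sigma_wc scB NB mulB PB"
  obtain KA where KA: "\<And>x. x \<in> ?SA \<Longrightarrow> norm (fA x) \<le> KA * NA x"
    using fA unfolding inner_on_def by blast
  obtain KB where KB: "\<And>x. x \<in> ?SB \<Longrightarrow> norm (fB x) \<le> KB * NB x"
    using fB unfolding inner_on_def by blast
  have bound: "norm (fA (fst x) + fB (snd x)) \<le> max KA KB * l1_norm NA NB x" if "x \<in> sigma_wc_sum" for x
  proof -
    have "norm (fA (fst x) + fB (snd x)) \<le> KA * NA (fst x) + KB * NB (snd x)"
      using KA[OF sigma_wc_sum_fst[OF that]] KB[OF sigma_wc_sum_snd[OF that]]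
      by (intro order_trans[OF norm_triangle_ineq add_mono])
    also have "\<dots> \<le> max KA KB * NA (fst x) + max KA KB * NB (snd x)"
      by (intro add_mono mult_right_mono) auto
    finally show ?thesis by (simp add: l1_norm_def distrib_left)
  qed
  have "D c y = (fA (mulA (fst y) (fst c)) + fB (mulB (snd y) (snd c)))
      - (fA (mulA (fst c) (fst y)) + fB (mulB (snd c) (snd y)))" if "y \<in> sigma_wc_sum" for c y
  proof -
    have "(0, snd y) \<in> sigma_wc_sum" "(fst y, 0) \<in> sigma_wc_sum"
      using sigma_wc_sum_inr sigma_wc_sum_inl sigma_wc_sum_snd sigma_wc_sum_fst that by blast+
    then have "D c y = D (fst c, 0) (fst y, 0) + D (0, snd c) (0, snd y)"
      by (intro dual_derivation_sum_split cross_inl_inr cross_inr_inl)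
    then show ?thesis
      using fA fB sigma_wc_sum_fst[OF that] sigma_wc_sum_snd[OF that] unfolding inner_on_def by simp
  qed
  moreover have "fA (fst (x + y)) + fB (snd (x + y)) = (fA (fst x) + fB (snd x)) + (fA (fst y) + fB (snd y))"
    "fA (fst (sum_sc scA scB c x)) + fB (snd (sum_sc scA scB c x)) = c * (fA (fst x) + fB (snd x))"
    if "x \<in> sigma_wc_sum" "y \<in> sigma_wc_sum" for c x y
    using fA fB sigma_wc_sum_fst[OF that(1)] sigma_wc_sum_snd[OF that(1)]
      sigma_wc_sum_fst[OF that(2)] sigma_wc_sum_snd[OF that(2)]
    unfolding inner_on_def by (simp_all add: sum_sc_def distrib_left)
  ultimately show ?thesis
    using bound unfolding inner_on_def by (auto simp: sum_mul_def intro!: exI[of _ "max KA KB"])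
qed

end

end

theorem theorem3p15:
  fixes scA :: "'k::{real_normed_field,banach} \<Rightarrow> 'a::ab_group_add \<Rightarrow> 'a"
    and NA :: "'a \<Rightarrow> real" and mulA :: "'a \<Rightarrow> 'a \<Rightarrow> 'a"
    and scAp :: "'k \<Rightarrow> 'p::ab_group_add \<Rightarrow> 'p" and NAp :: "'p \<Rightarrow> real" and PA :: "'a \<Rightarrow> 'p \<Rightarrow> 'k"
    and scB :: "'k \<Rightarrow> 'b::ab_group_add \<Rightarrow> 'b"
    and NB :: "'b \<Rightarrow> real" and mulB :: "'b \<Rightarrow> 'b \<Rightarrow> 'b"
    and scBp :: "'k \<Rightarrow> 'q::ab_group_add \<Rightarrow> 'q" and NBp :: "'q \<Rightarrow> real" and PB :: "'b \<Rightarrow> 'q \<Rightarrow> 'k"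
  assumes "dual_banach_algebra scA NA mulA scAp NAp PA"
    and "dual_banach_algebra scB NB mulB scBp NBp PB"
    and "weakly_connes_amenable scA NA mulA PA"
    and "weakly_connes_amenable scB NB mulB PB"
    and "sq_wstar_dense scA mulA PA"
    and "sq_wstar_dense scB mulB PB"
  shows "weakly_connes_amenable (sum_sc scA scB) (l1_norm NA NB) (sum_mul mulA mulB) (sum_pair PA PB)"
proof -
  interpret dual_banach_algebra_pair scA NA mulA scAp NAp PA scB NB mulB scBp NBp PB
    by (rule dual_banach_algebra_pair.intro[OF assms(1,2)])
  show ?thesis
    unfolding weakly_connes_amenable_iff_inner_on
  proof (intro allI impI, elim conjE)
    fix D
    assume D: "dual_derivation (sum_sc scA scB) (l1_norm NA NB) (sum_mul mulA mulB) D"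
      and cont_D: "\<forall>y\<in>sigma_wc_sum. continuous_map (wstar_top (sum_pair PA PB)) euclidean (\<lambda>c. D c y)"
    obtain fA where "inner_on scA NA mulA (sigma_wc scA NA mulA PA) (\<lambda>a z. D (a, 0) (z, 0)) fA"
      using inner_on_inl_corner[OF D cont_D assms(3)] .
    moreover obtain fB where "inner_on scB NB mulB (sigma_wc scB NB mulB PB) (\<lambda>b z. D (0, b) (0, z)) fB"
      using inner_on_inr_corner[OF D cont_D assms(4)] .
    ultimately show "\<exists>f. inner_on (sum_sc scA scB) (l1_norm NA NB) (sum_mul mulA mulB) sigma_wc_sum D f"
      using inner_on_sum[OF D cont_D _ _ dual_derivation_inl_inr_eq_0[OF D cont_D assms(5)]
          dual_derivation_inr_inl_eq_0[OF D cont_D assms(6)]]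
      by blast
  qed
qed

end
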